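(* Every open subspace of an $L$-selective space is $L$-selective.
   Context: All spaces are assumed $T_1$. For spaces $Y$, $X$, a map $\varphi:Y\to\mathcal P(X)\setminus\{\emptyset\}$ is lower semicontinuous (l.s.c.) if $\{y:\varphi(y)\cap U\neq\emptyset\}$ is open in $Y$ for every open $U\subseteq X$; a selection is a map $f:Y\to X$ with $f(y)\in\varphi(y)$ for all $y$. $X$ is $Y$-selective if every l.s.c. map from $Y$ to the nonempty closed subsets of $X$ has a continuous selection; $L$-selective means $(\omega+1)$-selective, where $\omega+1$ carries the order topology. *)

theory Defs
  imports "HOL-Analysis.Analysis" "HOL-Library.Extended_Nat"
begin

definition lsc_map :: "'b topology \<Rightarrow> 'a topology \<Rightarrow> ('b \<Rightarrow> 'a set) \<Rightarrow> bool" where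
  "lsc_map Y X \<phi> \<longleftrightarrow>
     (\<forall>U. openin X U \<longrightarrow> openin Y {y \<in> topspace Y. \<phi> y \<inter> U \<noteq> {}})"

definition selective :: "'b topology \<Rightarrow> 'a topology \<Rightarrow> bool" where
  "selective Y X \<longleftrightarrow>
     (\<forall>\<phi>. (\<forall>y \<in> topspace Y. closedin X (\<phi> y) \<and> \<phi> y \<noteq> {}) \<and> lsc_map Y X \<phi> \<longrightarrow>
        (\<exists>f. continuous_map Y X f \<and> (\<forall>y \<in> topspace Y. f y \<in> \<phi> y)))"

text \<open>omega+1 with the order topology is realised as enat with its order topology.\<close>
definition L_selective :: "'a topology \<Rightarrow> bool" where
  "L_selective X \<longleftrightarrow> selective (euclidean :: enat topology) X"

end

theory Submission
  imports Defs
begin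

text \<open>Given an l.s.c. map \<open>\<phi>\<close> from \<open>\<omega>+1\<close> into the nonempty closed subsets of the open set \<open>U\<close>,
  pick \<open>p \<in> \<phi> \<infinity>\<close> and select continuously, in \<open>X\<close>, from the closures \<open>X closure_of \<phi> n\<close> with
  the value at \<open>\<infinity>\<close> shrunk to \<open>{p}\<close>; this is again l.s.c. because \<open>\<infinity>\<close> is the only
  non-isolated point. The selection \<open>g\<close> has \<open>g \<infinity> = p \<in> U\<close>, so \<open>g n \<in> U\<close> for large \<open>n\<close>, and
  there \<open>g n \<in> U \<inter> X closure_of \<phi> n = \<phi> n\<close>. Redefining \<open>g\<close> at the finitely many
  remaining (isolated) points gives a selection of \<open>\<phi>\<close>.\<close>

lemma open_enat_iff_eventually:
  "open (S::enat set) \<longleftrightarrow> (\<infinity> \<in> S \<longrightarrow> (\<forall>\<^sub>F n in sequentially. enat n \<in> S))"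
proof -
  have "(\<exists>N::nat. {enat N<..} \<subseteq> S) \<longleftrightarrow> (\<forall>\<^sub>F n in sequentially. enat n \<in> S)" if "\<infinity> \<in> S"
  proof
    assume "\<exists>N::nat. {enat N<..} \<subseteq> S"
    then obtain N where "{enat N<..} \<subseteq> S" by blast
    then show "\<forall>\<^sub>F n in sequentially. enat n \<in> S"
      unfolding eventually_sequentially by (intro exI[of _ "Suc N"]) auto
  next
    assume "\<forall>\<^sub>F n in sequentially. enat n \<in> S"
    then obtain N where N: "\<And>n. N \<le> n \<Longrightarrow> enat n \<in> S"
      unfolding eventually_sequentially by blast
    have "{enat N<..} \<subseteq> S"
    proof
      fix y assume "y \<in> {enat N<..}"
      then show "y \<in> S" using N that by (cases y) auto
    qed
    then show "\<exists>N::nat. {enat N<..} \<subseteq> S" ..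
  qed
  then show ?thesis by (auto simp: open_enat_iff)
qed

lemma continuous_map_enat_iff:
  "continuous_map euclidean X f \<longleftrightarrow>
     range f \<subseteq> topspace X \<and> limitin X (\<lambda>n. f (enat n)) (f \<infinity>) sequentially"
  by (auto simp: continuous_map_def limitin_def open_enat_iff_eventually)

lemma t1_space_euclidean_enat: "t1_space (euclidean :: enat topology)"
  by (simp add: t1_space_closedin_singleton)

lemma lsc_map_closure_of:
  assumes "lsc_map Y (subtopology X U) \<phi>" and "\<And>y. y \<in> topspace Y \<Longrightarrow> \<phi> y \<subseteq> U"
  shows "lsc_map Y X (\<lambda>y. X closure_of \<phi> y)"
  unfolding lsc_map_def
proof (intro allI impI)
  fix W assume W: "openin X W"
  have "{y \<in> topspace Y. X closure_of \<phi> y \<inter> W \<noteq> {}} = {y \<in> topspace Y. \<phi> y \<inter> (U \<inter> W) \<noteq> {}}"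
    using assms(2) openin_Int_closure_of_eq_empty[OF W] by (fastforce simp: Int_commute)
  moreover have "openin (subtopology X U) (U \<inter> W)"
    using W by (simp add: openin_subtopology_Int2)
  ultimately show "openin Y {y \<in> topspace Y. X closure_of \<phi> y \<inter> W \<noteq> {}}"
    using assms(1) by (simp add: lsc_map_def)
qed

text \<open>The hitting set of an open set can only lose the point \<open>a\<close>, and points are closed.\<close>

lemma lsc_map_fun_upd_subset:
  assumes "t1_space Y" and "lsc_map Y X \<phi>" and "A \<subseteq> \<phi> a"
  shows "lsc_map Y X (\<phi>(a := A))"
  unfolding lsc_map_def
proof (intro allI impI)
  fix W assume "openin X W"
  then have S: "openin Y {y \<in> topspace Y. \<phi> y \<inter> W \<noteq> {}}" (is "openin Y ?S")
    using assms(2) by (simp add: lsc_map_def)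
  have "{y \<in> topspace Y. (\<phi>(a := A)) y \<inter> W \<noteq> {}} = (if A \<inter> W = {} then ?S - {a} else ?S)"
    using assms(3) by auto
  moreover have "openin Y (?S - {a})"
  proof (cases "a \<in> topspace Y")
    case True
    then show ?thesis using S closedin_t1_singleton[OF assms(1)] by (simp add: openin_diff)
  next
    case False
    then show ?thesis using S by (simp add: Diff_triv)
  qed
  ultimately show "openin Y {y \<in> topspace Y. (\<phi>(a := A)) y \<inter> W \<noteq> {}}"
    using S by simp
qed

lemma continuous_selection_from_closure_selection:
  fixes g :: "enat \<Rightarrow> 'a"
  assumes U: "openin X U" and g: "continuous_map euclidean X g"
    and g_infinity: "g \<infinity> \<in> \<phi> \<infinity>" and g_closure: "\<And>y. g y \<in> X closure_of \<phi> y"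
    and closed: "\<And>y. closedin (subtopology X U) (\<phi> y)" and nonempty: "\<And>y. \<phi> y \<noteq> {}"
  obtains f where "continuous_map euclidean (subtopology X U) f" and "\<And>y. f y \<in> \<phi> y"
proof
  define f where "f y = (if g y \<in> \<phi> y then g y else SOME z. z \<in> \<phi> y)" for y
  show sel: "f y \<in> \<phi> y" for y
    using nonempty[of y] by (simp add: f_def some_in_eq)
  have sub: "\<phi> y \<subseteq> topspace X \<inter> U" for y
    using closedin_subset[OF closed[of y]] by simp
  have "g \<infinity> \<in> U"
    using g_infinity sub by blast
  then have "\<forall>\<^sub>F n in sequentially. g (enat n) \<in> U"
    using g U by (auto simp: continuous_map_enat_iff limitin_def)
  then have "\<forall>\<^sub>F n in sequentially. g (enat n) = f (enat n)"
  proof eventually_elim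
    case (elim n)
    then have "g (enat n) \<in> \<phi> (enat n)"
      using g_closure closed by (metis IntI closedin_Int_closure_of)
    then show ?case by (simp add: f_def)
  qed
  moreover have "f \<infinity> = g \<infinity>"
    using g_infinity by (simp add: f_def)
  ultimately have "continuous_map euclidean X f"
    using g sel sub by (auto simp: continuous_map_enat_iff intro: limitin_transform_eventually)
  then show "continuous_map euclidean (subtopology X U) f"
    using sel sub by (auto simp: continuous_map_in_subtopology)
qed

lemma L_selective_obtain_closure_selection:
  fixes \<phi> :: "enat \<Rightarrow> 'a set"
  assumes "t1_space X" and "L_selective X"
    and lsc: "lsc_map euclidean (subtopology X U) \<phi>"
    and sub: "\<And>y. \<phi> y \<subseteq> topspace X \<inter> U" and nonempty: "\<And>y. \<phi> y \<noteq> {}"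
    and p: "p \<in> \<phi> \<infinity>"
  obtains g where "continuous_map euclidean X g" and "g \<infinity> = p"
    and "\<And>y. g y \<in> X closure_of \<phi> y"
proof -
  have closure: "\<phi> y \<subseteq> X closure_of \<phi> y" for y
    using sub by (simp add: closure_of_subset)
  define \<psi> where "\<psi> = (\<lambda>y. X closure_of \<phi> y)(\<infinity> := {p})"
  have "lsc_map euclidean X \<psi>"
    unfolding \<psi>_def using p closure sub
    by (intro lsc_map_fun_upd_subset t1_space_euclidean_enat lsc_map_closure_of[OF lsc]) auto
  moreover have "\<forall>y. closedin X (\<psi> y) \<and> \<psi> y \<noteq> {}"
    using p sub nonempty closure_of_eq_empty[of _ X]
    by (auto simp: \<psi>_def intro: closedin_t1_singleton[OF assms(1)])
  ultimately have "\<exists>g. continuous_map euclidean X g \<and> (\<forall>y. g y \<in> \<psi> y)"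
    using assms(2) by (simp add: L_selective_def selective_def)
  then obtain g where g: "continuous_map euclidean X g" and g_sel: "\<And>y. g y \<in> \<psi> y"
    by blast
  have g_infinity: "g \<infinity> = p"
    using g_sel[of \<infinity>] by (simp add: \<psi>_def)
  have "g y \<in> X closure_of \<phi> y" for y
    using g_sel[of y] p closure by (cases "y = \<infinity>") (auto simp: \<psi>_def g_infinity)
  with g g_infinity show ?thesis using that by blast
qed

theorem mainTheorem11:
  fixes X :: "'a topology" and U :: "'a set"
  assumes "t1_space X" and "L_selective X" and "openin X U"
  shows "L_selective (subtopology X U)"
  unfolding L_selective_def selective_def
proof (intro allI impI)
  fix \<phi> :: "enat \<Rightarrow> 'a set"
  assume "(\<forall>y\<in>topspace euclidean. closedin (subtopology X U) (\<phi> y) \<and> \<phi> y \<noteq> {})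
    \<and> lsc_map euclidean (subtopology X U) \<phi>"
  then have closed: "\<And>y. closedin (subtopology X U) (\<phi> y)" and nonempty: "\<And>y. \<phi> y \<noteq> {}"
    and lsc: "lsc_map euclidean (subtopology X U) \<phi>" by auto
  have sub: "\<phi> y \<subseteq> topspace X \<inter> U" for y
    using closedin_subset[OF closed[of y]] by simp
  obtain p where p: "p \<in> \<phi> \<infinity>" using nonempty by blast
  obtain g where g: "continuous_map euclidean X g" and "g \<infinity> = p"
    and "\<And>y. g y \<in> X closure_of \<phi> y"
    using L_selective_obtain_closure_selection[OF assms(1,2) lsc sub nonempty p] by blast
  then obtain f where "continuous_map euclidean (subtopology X U) f" "\<And>y. f y \<in> \<phi> y"
    using continuous_selection_from_closure_selection[OF assms(3) g] p closed nonempty by metis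
  then show "\<exists>f. continuous_map euclidean (subtopology X U) f \<and> (\<forall>y\<in>topspace euclidean. f y \<in> \<phi> y)"
    by blast
qed

end
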